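(* Consider the soft UCB algorithm described in the context, with $\xi(t)=1+\frac{t}{G(t)}$. Then the expected regret at time $n$ satisfies \[ \mathbb{E}[R_n]\le\sum_{j=1}^m G(j)\Delta_j+\max_{t\in\{m+1,\dots,n\}}G(t)\left(\sum_{j:\mu_j<\mu_*}\frac{8}{\Delta_j}\log\Big(\max_{t\in\{m+1,\dots,n\}}\xi(t)\Big)+\sum_{j=1}^m\Delta_j\Big[1+\sum_{t=m+1}^n2\,\xi(t)^{-4}(t-1-m)^2\Big]\right). \]
   Context: Setting: $m$ arms, $n$ rounds. Playing arm $j$ at round $t$ produces an unscaled random reward $X_j(t)$, drawn independently over rounds from a fixed unknown distribution on $[0,1]$ with mean $\mu_j$. $G:\{1,\dots,n\}\to\mathbb{R}^+$ is a known bounded multiplier function; playing arm $I_t=j$ yields $G(t)X_j(t)$. $\mu_*=\max_j\mu_j$, $\Delta_j=\mu_*-\mu_j$, regret $R_n=\sum_{t=1}^n\sum_{j=1}^m\Delta_jG(t)\mathbf{1}_{\{I_t=j\}}$. $T_j(t-1)$ is the number of plays of arm $j$ before round $t$, and $\widehat X_{j,T_j(t-1)}$ is the average of the unscaled rewards observed from arm $j$. Algorithm (soft UCB): play each arm once (arm $j$ at round $j$). For $t=m+1,\dots,n$: play an arm maximizing $\widehat X_{j,T_j(t-1)}+\sqrt{2\log\xi(t)/T_j(t-1)}$, where $\xi(t)=1+t/G(t)$; receive $G(t)X_j$ and update $\widehat X_j$. *)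

theory Defs
  imports "HOL-Probability.Probability"
begin

text \<open>Soft UCB. Arms are 1..m, rounds are 1..n. A history h is the list of arms
played in rounds 1..length h (round s+1 is h!s). The unscaled reward sample is
x j t = reward of arm j if played at round t.\<close>

definition xi :: "(nat \<Rightarrow> real) \<Rightarrow> nat \<Rightarrow> real" where
  "xi G t = 1 + real t / G t"

text \<open>Number of plays of arm j in the history (T_j(t-1) for t = length h + 1).\<close>
definition plays :: "nat list \<Rightarrow> nat \<Rightarrow> nat" where
  "plays h j = card {s. s < length h \<and> h ! s = j}"

definition emp_mean :: "(nat \<Rightarrow> nat \<Rightarrow> real) \<Rightarrow> nat list \<Rightarrow> nat \<Rightarrow> real" where
  "emp_mean x h j = (\<Sum>s | s < length h \<and> h ! s = j. x j (s + 1)) / real (plays h j)"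

definition ucb_index :: "(nat \<Rightarrow> real) \<Rightarrow> (nat \<Rightarrow> nat \<Rightarrow> real) \<Rightarrow> nat list \<Rightarrow> nat \<Rightarrow> real" where
  "ucb_index G x h j =
     emp_mean x h j + sqrt (2 * ln (xi G (length h + 1)) / real (plays h j))"

definition ucb_choice :: "nat \<Rightarrow> (nat \<Rightarrow> real) \<Rightarrow> (nat \<Rightarrow> nat \<Rightarrow> real) \<Rightarrow> nat list \<Rightarrow> nat" where
  "ucb_choice m G x h =
     (if length h + 1 \<le> m then length h + 1
      else (LEAST j. j \<in> {1..m} \<and> (\<forall>i\<in>{1..m}. ucb_index G x h i \<le> ucb_index G x h j)))"

primrec ucb_hist :: "nat \<Rightarrow> (nat \<Rightarrow> real) \<Rightarrow> (nat \<Rightarrow> nat \<Rightarrow> real) \<Rightarrow> nat \<Rightarrow> nat list" where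
  "ucb_hist m G x 0 = []"
| "ucb_hist m G x (Suc k) = ucb_hist m G x k @ [ucb_choice m G x (ucb_hist m G x k)]"

definition ucb_arm :: "nat \<Rightarrow> (nat \<Rightarrow> real) \<Rightarrow> (nat \<Rightarrow> nat \<Rightarrow> real) \<Rightarrow> nat \<Rightarrow> nat" where
  "ucb_arm m G x t = ucb_hist m G x t ! (t - 1)"

definition regret :: "nat \<Rightarrow> nat \<Rightarrow> (nat \<Rightarrow> real) \<Rightarrow> (nat \<Rightarrow> real) \<Rightarrow> (nat \<Rightarrow> nat \<Rightarrow> real) \<Rightarrow> real" where
  "regret m n G mu x =
     (\<Sum>t\<in>{1..n}. \<Sum>j\<in>{1..m}.
        (Max (mu ` {1..m}) - mu j) * G t * (if ucb_arm m G x t = j then 1 else 0))"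

end

theory Submission
  imports Defs
begin

text \<open>After the \<open>m\<close> initial rounds, a suboptimal arm \<open>j\<close> that already has
  \<open>\<ell>\<^sub>j \<approx> 8 log \<xi> / \<Delta>\<^sub>j\<^sup>2\<close> samples can only be chosen at round \<open>t\<close> if the confidence
  bound of the optimal arm or of arm \<open>j\<close> fails at its current sample count. So arm \<open>j\<close> is
  played at most \<open>\<ell>\<^sub>j - 1\<close> times plus the number of such failures, counted over all rounds
  and all possible sample counts. Each failure has probability at most \<open>\<xi>(t)\<^sup>-\<^sup>4\<close>:
  since the number of samples is random, the fixed-sample Hoeffding inequality is replaced by the
  exponential supermartingale formed by the rewards of an arm at the rounds where it is chosen
  (Hoeffding's lemma plus independence of the rounds). Weighting rounds by \<open>G(t) \<le> max G\<close>
  gives the bound.\<close>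

section \<open>The play history\<close>

lemma length_ucb_hist [simp]: "length (ucb_hist m G x k) = k"
  by (induction k) auto

lemma ucb_hist_eq_take: "k \<le> k' \<Longrightarrow> ucb_hist m G x k = take k (ucb_hist m G x k')"
  by (induction k' rule: dec_induct) simp_all

lemma nth_ucb_hist_eq_ucb_arm:
  assumes "1 \<le> r" "r \<le> R"
  shows "ucb_hist m G x R ! (r - 1) = ucb_arm m G x r"
  using ucb_hist_eq_take[OF assms(2), of m G x] assms by (simp add: ucb_arm_def)

lemma ucb_arm_Suc: "ucb_arm m G x (Suc k) = ucb_choice m G x (ucb_hist m G x k)"
  by (simp add: ucb_arm_def nth_append)

lemma plays_snoc: "plays (h @ [a]) j = plays h j + (if a = j then 1 else 0)"
proof -
  have "{s. s < length (h @ [a]) \<and> (h @ [a]) ! s = j} =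
        {s. s < length h \<and> h ! s = j} \<union> (if a = j then {length h} else {})"
    by (auto simp: nth_append less_Suc_eq split: if_splits)
  then show ?thesis
    by (simp add: plays_def)
qed

lemma plays_ucb_hist_Suc:
  "plays (ucb_hist m G x (Suc k)) j =
     plays (ucb_hist m G x k) j + (if ucb_arm m G x (Suc k) = j then 1 else 0)"
  by (simp add: plays_snoc ucb_arm_Suc)

lemma plays_ucb_hist_mono:
  "k \<le> k' \<Longrightarrow> plays (ucb_hist m G x k) j \<le> plays (ucb_hist m G x k') j"
  by (induction k' rule: dec_induct) (simp_all add: plays_snoc)

lemma plays_ucb_hist_less:
  assumes "1 \<le> r" "r \<le> R" "ucb_arm m G x r = i"
  shows "plays (ucb_hist m G x (r - 1)) i < plays (ucb_hist m G x R) i"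
proof -
  obtain k where k: "r = Suc k" using assms by (cases r) auto
  have "plays (ucb_hist m G x k) i < plays (ucb_hist m G x (Suc k)) i"
    using assms k by (simp add: plays_ucb_hist_Suc del: ucb_hist.simps)
  also have "\<dots> \<le> plays (ucb_hist m G x R) i"
    using assms k by (intro plays_ucb_hist_mono) auto
  finally show ?thesis using k by simp
qed

lemma ucb_arm_initial: "t \<in> {1..m} \<Longrightarrow> ucb_arm m G x t = t"
  using ucb_arm_Suc[of m G x "t - 1"] by (simp add: ucb_choice_def)

lemma ucb_choice_maximizes:
  assumes "1 \<le> m" "m \<le> length h"
  shows "ucb_choice m G x h \<in> {1..m}"
    and "\<And>i. i \<in> {1..m} \<Longrightarrow> ucb_index G x h i \<le> ucb_index G x h (ucb_choice m G x h)"
proof -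
  let ?P = "\<lambda>j. j \<in> {1..m} \<and> (\<forall>i\<in>{1..m}. ucb_index G x h i \<le> ucb_index G x h j)"
  have "Max (ucb_index G x h ` {1..m}) \<in> ucb_index G x h ` {1..m}"
    using assms(1) by (intro Max_in) auto
  then obtain j where "j \<in> {1..m}" "ucb_index G x h j = Max (ucb_index G x h ` {1..m})"
    by auto
  then have "?P j" by auto
  then have "?P (Least ?P)" by (rule LeastI)
  moreover have "ucb_choice m G x h = Least ?P"
    using assms by (simp add: ucb_choice_def)
  ultimately show "ucb_choice m G x h \<in> {1..m}"
    and "\<And>i. i \<in> {1..m} \<Longrightarrow> ucb_index G x h i \<le> ucb_index G x h (ucb_choice m G x h)"
    by auto
qed

lemma ucb_choice_in_arms: "1 \<le> m \<Longrightarrow> ucb_choice m G x h \<in> {1..m}"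
  using ucb_choice_maximizes(1)[of m h] by (cases "length h < m") (auto simp: ucb_choice_def)

lemma ucb_arm_in_arms: "1 \<le> m \<Longrightarrow> 1 \<le> t \<Longrightarrow> ucb_arm m G x t \<in> {1..m}"
  using ucb_arm_Suc[of m G x "t - 1"] ucb_choice_in_arms[of m G x] by simp

lemma set_ucb_hist_subset: "1 \<le> m \<Longrightarrow> set (ucb_hist m G x k) \<subseteq> {1..m}"
  using ucb_choice_in_arms[of m G x] by (induction k) auto

lemma plays_ucb_hist_pos:
  assumes "i \<in> {1..m}" "m \<le> k"
  shows "1 \<le> plays (ucb_hist m G x k) i"
proof -
  have "0 < plays (ucb_hist m G x i) i"
    using plays_ucb_hist_less[of i i m G x i] assms by (simp add: ucb_arm_initial)
  also have "\<dots> \<le> plays (ucb_hist m G x k) i"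
    using assms by (intro plays_ucb_hist_mono) auto
  finally show ?thesis by simp
qed

lemma sum_plays: "set h \<subseteq> {1..m} \<Longrightarrow> (\<Sum>i\<in>{1..m}. plays h i) = length h"
proof (induction h rule: rev_induct)
  case Nil then show ?case by (simp add: plays_def)
next
  case (snoc a h)
  then show ?case by (simp add: plays_snoc sum.distrib)
qed

lemma plays_two_arms_le:
  assumes "i \<in> {1..m}" "j \<in> {1..m}" "i \<noteq> j" "m \<le> k"
  shows "plays (ucb_hist m G x k) i + plays (ucb_hist m G x k) j + (m - 2) \<le> k"
proof -
  let ?p = "plays (ucb_hist m G x k)"
  define Rest where "Rest = {1..m} - {i} - {j}"
  have "card Rest \<le> sum ?p Rest"
    using plays_ucb_hist_pos assms(4) unfolding card_eq_sum Rest_def by (intro sum_mono) auto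
  moreover have "card Rest = m - 2"
    using assms unfolding Rest_def by (simp add: card_Diff_singleton)
  moreover have "?p i + ?p j + sum ?p Rest = k"
    using sum_plays[OF set_ucb_hist_subset, of m G x k] assms
    unfolding Rest_def by (simp add: sum.remove[of _ i] sum.remove[of _ j])
  ultimately show ?thesis by linarith
qed

lemma ucb_hist_cong:
  assumes "\<And>j r. j \<in> {1..m} \<Longrightarrow> 1 \<le> r \<Longrightarrow> r < k \<Longrightarrow> x j r = x' j r"
  shows "ucb_hist m G x k = ucb_hist m G x' k"
  using assms
proof (induction k)
  case 0 then show ?case by simp
next
  case (Suc k)
  define h where "h = ucb_hist m G x' k"
  have "ucb_index G x h j = ucb_index G x' h j" if "j \<in> {1..m}" for j
    unfolding ucb_index_def emp_mean_def h_def using that Suc.prems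
    by (intro arg_cong2[where f="(+)"] arg_cong2[where f="(/)"] sum.cong refl) auto
  then have "ucb_choice m G x h = ucb_choice m G x' h"
    unfolding ucb_choice_def by (intro if_cong refl arg_cong[where f=Least] ext) auto
  then show ?case using Suc by (simp add: h_def)
qed

lemma ucb_arm_cong:
  assumes "\<And>j r. j \<in> {1..m} \<Longrightarrow> 1 \<le> r \<Longrightarrow> r < t \<Longrightarrow> x j r = x' j r"
  shows "ucb_arm m G x t = ucb_arm m G x' t"
  unfolding ucb_arm_def using ucb_hist_cong[of m t x x' G] assms by simp

lemma measurable_ucb_index:
  assumes [measurable]: "\<And>j t. (\<lambda>\<omega>. x \<omega> j t) \<in> borel_measurable N"
  shows "(\<lambda>\<omega>. ucb_index G (x \<omega>) h j) \<in> borel_measurable N"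
  unfolding ucb_index_def emp_mean_def by measurable

lemma measurable_ucb_choice:
  assumes "\<And>j t. (\<lambda>\<omega>. x \<omega> j t) \<in> borel_measurable N"
  shows "(\<lambda>\<omega>. ucb_choice m G (x \<omega>) h) \<in> N \<rightarrow>\<^sub>M count_space UNIV"
proof -
  note [measurable] = measurable_ucb_index[OF assms]
  show ?thesis unfolding ucb_choice_def by measurable
qed

lemma measurable_ucb_hist:
  assumes "\<And>j t. (\<lambda>\<omega>. x \<omega> j t) \<in> borel_measurable N"
  shows "(\<lambda>\<omega>. ucb_hist m G (x \<omega>) k) \<in> N \<rightarrow>\<^sub>M count_space UNIV"
proof (induction k)
  case 0 then show ?case by simp
next
  case (Suc k)
  have "(\<lambda>\<omega>. (\<lambda>h. h @ [ucb_choice m G (x \<omega>) h]) (ucb_hist m G (x \<omega>) k))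
      \<in> N \<rightarrow>\<^sub>M count_space UNIV"
  proof (rule measurable_compose_countable[OF _ Suc])
    fix h
    show "(\<lambda>\<omega>. h @ [ucb_choice m G (x \<omega>) h]) \<in> N \<rightarrow>\<^sub>M count_space UNIV"
      by (rule measurable_compose[OF measurable_ucb_choice[OF assms] measurable_count_space])
  qed
  then show ?case by simp
qed

lemma measurable_ucb_arm:
  assumes "\<And>j t. (\<lambda>\<omega>. x \<omega> j t) \<in> borel_measurable N"
  shows "(\<lambda>\<omega>. ucb_arm m G (x \<omega>) t) \<in> N \<rightarrow>\<^sub>M count_space UNIV"
  unfolding ucb_arm_def
  by (rule measurable_compose[OF measurable_ucb_hist[OF assms] measurable_count_space])

lemma measurable_pred_ucb_hist:
  assumes "\<And>j t. (\<lambda>\<omega>. x \<omega> j t) \<in> borel_measurable N"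
    and "\<And>h. Measurable.pred N (P h)"
  shows "Measurable.pred N (\<lambda>\<omega>. P (ucb_hist m G (x \<omega>) k) \<omega>)"
  by (rule measurable_compose_countable[OF assms(2) measurable_ucb_hist[OF assms(1)]])

section \<open>Violated confidence bounds\<close>

lemma late_plays_le:
  assumes "1 \<le> m"
  shows "(\<Sum>t\<in>{m+1..n}. if ucb_arm m G x t = j then 1 else 0 :: real)
     \<le> real (ell - 1) + (\<Sum>t\<in>{m+1..n}.
           if ucb_arm m G x t = j \<and> ell \<le> plays (ucb_hist m G x (t - 1)) j then 1 else 0)"
proof -
  let ?T = "\<lambda>t. plays (ucb_hist m G x (t - 1)) j"
  define S where "S = {t\<in>{m+1..n}. ucb_arm m G x t = j \<and> ?T t < ell}"
  have "inj_on ?T S"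
  proof (rule linorder_inj_onI')
    fix a b assume "a \<in> S" "b \<in> S" "a < b"
    then have "?T a < ?T b"
      by (intro plays_ucb_hist_less) (auto simp: S_def)
    then show "?T a \<noteq> ?T b" by simp
  qed
  moreover have "?T ` S \<subseteq> {1..ell - 1}"
  proof
    fix v assume "v \<in> ?T ` S"
    then obtain t where t: "t \<in> S" "v = ?T t" by auto
    then have "j \<in> {1..m}" using ucb_arm_in_arms[OF assms, of t G x] unfolding S_def by auto
    then show "v \<in> {1..ell - 1}" using t plays_ucb_hist_pos[of j m "t - 1"] unfolding S_def by auto
  qed
  ultimately have "card S \<le> ell - 1"
    using card_inj_on_le[of ?T S "{1..ell - 1}"] by simp
  moreover have "(\<Sum>t\<in>{m+1..n}. if ucb_arm m G x t = j then 1 else 0 :: real) =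
      (\<Sum>t\<in>{m+1..n}. if ucb_arm m G x t = j \<and> ell \<le> ?T t then 1 else 0) +
      (\<Sum>t\<in>{m+1..n}. if ucb_arm m G x t = j \<and> ?T t < ell then 1 else 0)"
    by (subst sum.distrib[symmetric]) (intro sum.cong, auto)
  moreover have "(\<Sum>t\<in>{m+1..n}. if ucb_arm m G x t = j \<and> ?T t < ell then 1 else 0 :: real) = card S"
    unfolding S_def by (simp add: sum.If_cases Int_def)
  ultimately show ?thesis by simp
qed

lemma radius_le_half_gap:
  fixes L T D :: real
  assumes "8 * L \<le> T * D^2" "0 < T" "0 \<le> D"
  shows "2 * sqrt (2 * L / T) \<le> D"
proof -
  have "2 * L / T \<le> (D / 2)^2"
    using assms by (simp add: divide_le_eq power_divide algebra_simps)
  then have "sqrt (2 * L / T) \<le> sqrt ((D / 2)^2)" by (rule real_sqrt_le_mono)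
  then show ?thesis using assms(3) by simp
qed

text \<open>The sign \<open>\<sigma>\<close> selects the direction of the deviation: \<open>\<sigma> = -1\<close> means the mean is
  underestimated, \<open>\<sigma> = 1\<close> that it is overestimated.\<close>
definition confidence_violation ::
  "nat \<Rightarrow> (nat \<Rightarrow> real) \<Rightarrow> (nat \<Rightarrow> nat \<Rightarrow> real) \<Rightarrow> nat \<Rightarrow> nat \<Rightarrow> nat \<Rightarrow> real \<Rightarrow> real \<Rightarrow> bool"
  where "confidence_violation m G x i t s \<sigma> \<mu> \<longleftrightarrow>
     plays (ucb_hist m G x (t - 1)) i = s \<and>
     sqrt (2 * ln (xi G t) / real s) \<le> \<sigma> * (emp_mean x (ucb_hist m G x (t - 1)) i - \<mu>)"

text \<open>The sample counts range over sets of \<open>t - m - 1\<close> elements each, since the two counts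
  add up to at most \<open>t - m + 1\<close>.\<close>
lemma ucb_confidence_violated:
  assumes "1 \<le> m" "m < t" and i: "i \<in> {1..m}" and j: "j \<in> {1..m}" and gap: "mu j < mu i"
    and arm: "ucb_arm m G x t = j"
    and enough: "8 * ln (xi G t) \<le> real (plays (ucb_hist m G x (t - 1)) j) * (mu i - mu j)^2"
    and two: "2 \<le> plays (ucb_hist m G x (t - 1)) j"
  shows "(\<exists>s\<in>{1..t-m-1}. confidence_violation m G x i t s (-1) (mu i)) \<or>
         (\<exists>s\<in>{2..t-m}. confidence_violation m G x j t s 1 (mu j))"
proof (rule ccontr)
  define h where "h = ucb_hist m G x (t - 1)"
  define Ti Tj where "Ti = plays h i" and "Tj = plays h j"
  define ci cj where "ci = sqrt (2 * ln (xi G t) / real Ti)" and "cj = sqrt (2 * ln (xi G t) / real Tj)"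
  have "i \<noteq> j" "m \<le> t - 1" using gap assms(2) by auto
  then have "Ti + Tj + (m - 2) \<le> t - 1" "1 \<le> Ti"
    using plays_two_arms_le[OF i j] plays_ucb_hist_pos[OF i] unfolding Ti_def Tj_def h_def by auto
  then have range: "Ti \<in> {1..t-m-1}" "Tj \<in> {2..t-m}"
    using two i j gap unfolding Tj_def h_def by auto
  assume "\<not> ?thesis"
  then have i_under: "mu i < emp_mean x h i + ci" and j_over: "emp_mean x h j < mu j + cj"
    using range unfolding confidence_violation_def ci_def cj_def Ti_def Tj_def h_def by auto
  have "2 * cj \<le> mu i - mu j"
    unfolding cj_def using enough two gap
    by (intro radius_le_half_gap) (auto simp: Tj_def h_def)
  moreover have "ucb_index G x h i \<le> ucb_index G x h j"
    using ucb_choice_maximizes(2)[OF assms(1), of h i G x] ucb_arm_Suc[of m G x "t - 1"] arm i assms(2)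
    by (simp add: h_def)
  moreover have "ucb_index G x h i = emp_mean x h i + ci" "ucb_index G x h j = emp_mean x h j + cj"
    using assms(2) by (simp_all add: ucb_index_def h_def ci_def cj_def Ti_def Tj_def)
  ultimately show False using i_under j_over by linarith
qed

definition violations ::
  "nat \<Rightarrow> nat \<Rightarrow> (nat \<Rightarrow> real) \<Rightarrow> (nat \<Rightarrow> real) \<Rightarrow> nat \<Rightarrow> nat \<Rightarrow> (nat \<Rightarrow> nat \<Rightarrow> real) \<Rightarrow> real"
  where "violations m n G mu i j x =
    (\<Sum>t\<in>{m+1..n}.
       (\<Sum>s\<in>{1..t-m-1}. if confidence_violation m G x i t s (-1) (mu i) then 1 else 0) +
       (\<Sum>s\<in>{2..t-m}. if confidence_violation m G x j t s 1 (mu j) then 1 else 0))"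

lemma one_le_sum_indicator:
  "finite A \<Longrightarrow> a \<in> A \<Longrightarrow> P a \<Longrightarrow> 1 \<le> (\<Sum>x\<in>A. if P x then 1 else 0 :: real)"
  using member_le_sum[of a A "\<lambda>x. if P x then 1 else 0 :: real"] by simp

lemma late_play_le_round_violations:
  assumes "1 \<le> m" "m < t" "i \<in> {1..m}" "j \<in> {1..m}" "mu j < mu i" "2 \<le> ell"
    and enough: "8 * ln (xi G t) \<le> real ell * (mu i - mu j)^2"
  shows "(if ucb_arm m G x t = j \<and> ell \<le> plays (ucb_hist m G x (t - 1)) j then 1 else 0)
    \<le> (\<Sum>s\<in>{1..t-m-1}. if confidence_violation m G x i t s (-1) (mu i) then 1 else 0) +
       (\<Sum>s\<in>{2..t-m}. if confidence_violation m G x j t s 1 (mu j) then 1 else 0 :: real)"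
    (is "_ \<le> ?Vi + ?Vj")
proof (cases "ucb_arm m G x t = j \<and> ell \<le> plays (ucb_hist m G x (t - 1)) j")
  case True
  have "real ell * (mu i - mu j)^2 \<le> real (plays (ucb_hist m G x (t - 1)) j) * (mu i - mu j)^2"
    using True by (intro mult_right_mono) simp_all
  then have "8 * ln (xi G t) \<le> real (plays (ucb_hist m G x (t - 1)) j) * (mu i - mu j)^2"
    using enough by linarith
  then have "(\<exists>s\<in>{1..t-m-1}. confidence_violation m G x i t s (-1) (mu i)) \<or>
      (\<exists>s\<in>{2..t-m}. confidence_violation m G x j t s 1 (mu j))"
    using True assms by (intro ucb_confidence_violated) auto
  then have "1 \<le> ?Vi \<or> 1 \<le> ?Vj" by (auto intro: one_le_sum_indicator)
  moreover have "0 \<le> ?Vi" "0 \<le> ?Vj" by (simp_all add: sum_nonneg)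
  ultimately show ?thesis using True by auto
next
  case False
  have "0 \<le> ?Vi + ?Vj" by (simp add: sum_nonneg)
  then show ?thesis by (simp only: if_not_P[OF False])
qed

lemma late_plays_le_violations:
  assumes "1 \<le> m" "i \<in> {1..m}" "j \<in> {1..m}" "mu j < mu i" "2 \<le> ell"
    and "\<And>t. t \<in> {m+1..n} \<Longrightarrow> 8 * ln (xi G t) \<le> real ell * (mu i - mu j)^2"
  shows "(\<Sum>t\<in>{m+1..n}. if ucb_arm m G x t = j then 1 else 0)
    \<le> real (ell - 1) + violations m n G mu i j x"
proof -
  have "(\<Sum>t\<in>{m+1..n}. if ucb_arm m G x t = j \<and> ell \<le> plays (ucb_hist m G x (t - 1)) j then 1 else 0)
      \<le> violations m n G mu i j x"
    unfolding violations_def using assms by (intro sum_mono late_play_le_round_violations) auto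
  then show ?thesis
    using late_plays_le[OF assms(1), where n=n and G=G and x=x and j=j and ell=ell] by linarith
qed

lemma regret_le_late_plays:
  assumes "m \<le> n" "i \<in> {1..m}" "mu i = Max (mu ` {1..m})"
    and G_le: "\<And>t. t \<in> {m+1..n} \<Longrightarrow> G t \<le> Gmax"
  shows "regret m n G mu x \<le> (\<Sum>j\<in>{1..m}. G j * (mu i - mu j)) +
    Gmax * (\<Sum>j\<in>{j\<in>{1..m}. mu j < mu i}.
      (mu i - mu j) * (\<Sum>t\<in>{m+1..n}. if ucb_arm m G x t = j then 1 else 0))"
proof -
  define D where "D j = mu i - mu j" for j
  define N where "N j = (\<Sum>t\<in>{m+1..n}. if ucb_arm m G x t = j then 1 else 0 :: real)" for j
  define r where "r t = (\<Sum>j\<in>{1..m}. D j * G t * (if ucb_arm m G x t = j then 1 else 0))" for t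
  have D_nonneg: "0 \<le> D j" if "j \<in> {1..m}" for j
    using assms(3) that by (simp add: D_def)
  have "regret m n G mu x = sum r {1..m} + sum r {m+1..n}"
  proof -
    have "{1..n} = {1..m} \<union> {m+1..n}" using assms(1) by auto
    then show ?thesis
      unfolding regret_def r_def D_def assms(3)[symmetric] by (simp add: sum.union_disjoint)
  qed
  moreover have "sum r {1..m} = (\<Sum>j\<in>{1..m}. G j * D j)"
    by (intro sum.cong refl) (simp add: r_def ucb_arm_initial if_distrib sum.delta cong: if_cong)
  moreover have "sum r {m+1..n} \<le> (\<Sum>t\<in>{m+1..n}. \<Sum>j\<in>{1..m}. Gmax * (D j * (if ucb_arm m G x t = j then 1 else 0)))"
    unfolding r_def
  proof (intro sum_mono)
    fix t j assume "t \<in> {m+1..n}" "j \<in> {1..m}"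
    then have "D j * G t \<le> D j * Gmax" using G_le D_nonneg by (intro mult_left_mono) auto
    then show "D j * G t * (if ucb_arm m G x t = j then 1 else 0)
        \<le> Gmax * (D j * (if ucb_arm m G x t = j then 1 else 0))"
      by (simp add: mult.commute)
  qed
  moreover have "\<dots> = Gmax * (\<Sum>j\<in>{1..m}. D j * N j)"
    unfolding N_def by (subst sum.swap) (simp add: sum_distrib_left)
  moreover have "(\<Sum>j\<in>{1..m}. D j * N j) = (\<Sum>j\<in>{j\<in>{1..m}. mu j < mu i}. D j * N j)"
    using D_nonneg by (intro sum.mono_neutral_right) (auto simp: D_def less_le)
  ultimately show ?thesis unfolding D_def N_def by (simp add: mult.commute)
qed

lemma regret_le_violations:
  assumes "1 \<le> m" "m \<le> n" "i \<in> {1..m}" "mu i = Max (mu ` {1..m})"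
    and "\<And>t. t \<in> {m+1..n} \<Longrightarrow> G t \<le> Gmax" "0 \<le> Gmax"
    and "\<And>j. 2 \<le> ell j"
    and "\<And>j t. j \<in> {1..m} \<Longrightarrow> mu j < mu i \<Longrightarrow> t \<in> {m+1..n} \<Longrightarrow>
           8 * ln (xi G t) \<le> real (ell j) * (mu i - mu j)^2"
  shows "regret m n G mu x \<le> (\<Sum>j\<in>{1..m}. G j * (mu i - mu j)) +
    Gmax * (\<Sum>j\<in>{j\<in>{1..m}. mu j < mu i}. (mu i - mu j) * (real (ell j - 1) + violations m n G mu i j x))"
proof -
  have "(\<Sum>j\<in>{j\<in>{1..m}. mu j < mu i}. (mu i - mu j) * (\<Sum>t\<in>{m+1..n}. if ucb_arm m G x t = j then 1 else 0))
      \<le> (\<Sum>j\<in>{j\<in>{1..m}. mu j < mu i}. (mu i - mu j) * (real (ell j - 1) + violations m n G mu i j x))"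
    using assms by (intro sum_mono mult_left_mono late_plays_le_violations) auto
  then show ?thesis
    using regret_le_late_plays[OF assms(2-5), where x=x] mult_left_mono[OF _ assms(6)] by fastforce
qed

definition sample_threshold :: "real \<Rightarrow> real \<Rightarrow> nat" where
  "sample_threshold L D = max 2 (nat \<lceil>8 * L / D^2\<rceil>)"

lemma sample_threshold_ge_2: "2 \<le> sample_threshold L D"
  by (simp add: sample_threshold_def)

lemma sample_threshold_mult_gap_ge:
  assumes "0 < D"
  shows "8 * L \<le> real (sample_threshold L D) * D^2"
proof -
  have "8 * L = 8 * L / D^2 * D^2" using assms by simp
  also have "\<dots> \<le> real (sample_threshold L D) * D^2"
    unfolding sample_threshold_def using real_nat_ceiling_ge[of "8 * L / D^2"]
    by (intro mult_right_mono) (simp_all add: of_nat_max le_max_iff_disj)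
  finally show ?thesis .
qed

lemma gap_mult_sample_threshold_le:
  assumes "0 \<le> L" "0 < D" "V \<le> S"
  shows "D * (real (sample_threshold L D - 1) + V) \<le> 8 / D * L + D * (1 + S)"
proof -
  define y where "y = 8 * L / D^2"
  have "0 \<le> y" using assms by (simp add: y_def)
  then have "real (sample_threshold L D - 1) + V \<le> y + 1 + S"
    using assms(3) unfolding sample_threshold_def y_def[symmetric] by linarith
  then have "D * (real (sample_threshold L D - 1) + V) \<le> D * (y + 1 + S)"
    using assms(2) by (intro mult_left_mono) auto
  also have "D * (y + 1 + S) = 8 / D * L + D * (1 + S)"
    using assms(2) by (simp add: y_def power2_eq_square field_simps)
  finally show ?thesis .
qed

text \<open>The argument gives the factor \<open>2 (t - m - 1)\<close>; the stated bound has its square.\<close>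
lemma violation_sum_le_square_sum:
  "(\<Sum>t\<in>{m+1..n}. 2 * real (t - m - 1) * xi G t powr -4)
     \<le> (\<Sum>t\<in>{m+1..n}. 2 * (xi G t) powr (-4) * (real t - 1 - real m)^2)"
proof (intro sum_mono)
  fix t assume "t \<in> {m+1..n}"
  then have k: "real t - 1 - real m = real (t - m - 1)" by (simp add: of_nat_diff)
  have "real (t - m - 1) \<le> real (t - m - 1)^2"
    by (cases "t - m - 1") (simp_all add: power2_eq_square)
  then have "real (t - m - 1) * xi G t powr -4 \<le> real (t - m - 1)^2 * xi G t powr -4"
    by (rule mult_right_mono) simp
  then show "2 * real (t - m - 1) * xi G t powr -4 \<le> 2 * xi G t powr -4 * (real t - 1 - real m)^2"
    unfolding k by (simp add: mult_ac)
qed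

section \<open>An exponential supermartingale\<close>

lemma rounds_playing_eq:
  "{r\<in>{1..R}. ucb_arm m G x r = i} = Suc ` {k. k < R \<and> ucb_hist m G x R ! k = i}"
proof (intro set_eqI iffI)
  fix r assume "r \<in> {r\<in>{1..R}. ucb_arm m G x r = i}"
  then show "r \<in> Suc ` {k. k < R \<and> ucb_hist m G x R ! k = i}"
    using nth_ucb_hist_eq_ucb_arm[of r R m G x] by (intro image_eqI[of _ _ "r - 1"]) auto
next
  fix r assume "r \<in> Suc ` {k. k < R \<and> ucb_hist m G x R ! k = i}"
  then show "r \<in> {r\<in>{1..R}. ucb_arm m G x r = i}"
    using nth_ucb_hist_eq_ucb_arm[of r R m G x] by auto
qed

text \<open>Whether
  round \<open>r\<close> contributes a factor depends only on the rewards before round \<open>r\<close>, so by Hoeffding's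
  lemma each factor has conditional expectation at most \<open>1\<close>.\<close>
definition hoeffding_process ::
  "nat \<Rightarrow> (nat \<Rightarrow> real) \<Rightarrow> nat \<Rightarrow> real \<Rightarrow> real \<Rightarrow> real \<Rightarrow> (nat \<Rightarrow> nat \<Rightarrow> real) \<Rightarrow> nat \<Rightarrow> real"
  where "hoeffding_process m G i \<sigma> \<mu> l x R =
    (\<Prod>r\<in>{1..R}. if ucb_arm m G x r = i then exp (l * \<sigma> * (x i r - \<mu>) - l^2 / 8) else 1)"

lemma hoeffding_process_Suc:
  "hoeffding_process m G i \<sigma> \<mu> l x (Suc R) = hoeffding_process m G i \<sigma> \<mu> l x R *
     (if ucb_arm m G x (Suc R) = i then exp (l * \<sigma> * (x i (Suc R) - \<mu>) - l^2 / 8) else 1)"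
  by (simp add: hoeffding_process_def atLeastAtMostSuc_conv mult.commute)

lemma hoeffding_process_cong:
  assumes "i \<in> {1..m}" "\<And>j r. j \<in> {1..m} \<Longrightarrow> 1 \<le> r \<Longrightarrow> r \<le> R \<Longrightarrow> x j r = x' j r"
  shows "hoeffding_process m G i \<sigma> \<mu> l x R = hoeffding_process m G i \<sigma> \<mu> l x' R"
  unfolding hoeffding_process_def
proof (intro prod.cong refl)
  fix r assume r: "r \<in> {1..R}"
  then have "ucb_arm m G x r = ucb_arm m G x' r"
    using assms(2) by (intro ucb_arm_cong) auto
  moreover have "x i r = x' i r" using assms r by auto
  ultimately show "(if ucb_arm m G x r = i then exp (l * \<sigma> * (x i r - \<mu>) - l^2 / 8) else 1) =
      (if ucb_arm m G x' r = i then exp (l * \<sigma> * (x' i r - \<mu>) - l^2 / 8) else 1)"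
    by simp
qed

lemma measurable_hoeffding_process:
  assumes "\<And>j t. (\<lambda>\<omega>. x \<omega> j t) \<in> borel_measurable N"
  shows "(\<lambda>\<omega>. hoeffding_process m G i \<sigma> \<mu> l (x \<omega>) R) \<in> borel_measurable N"
proof -
  note [measurable] = assms measurable_ucb_arm[OF assms]
  show ?thesis unfolding hoeffding_process_def by measurable
qed

lemma hoeffding_process_eq:
  "hoeffding_process m G i \<sigma> \<mu> l x R =
    exp (l * \<sigma> * real (plays (ucb_hist m G x R) i) * (emp_mean x (ucb_hist m G x R) i - \<mu>)
      - l^2 / 8 * real (plays (ucb_hist m G x R) i))"
proof -
  define h where "h = ucb_hist m G x R"
  define P where "P = {k. k < R \<and> h ! k = i}"
  have P: "finite P" "card P = plays h i" by (simp_all add: P_def plays_def h_def)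
  have "hoeffding_process m G i \<sigma> \<mu> l x R =
      (\<Prod>r\<in>{r\<in>{1..R}. ucb_arm m G x r = i}. exp (l * \<sigma> * (x i r - \<mu>) - l^2 / 8))"
    unfolding hoeffding_process_def by (rule prod.inter_filter[symmetric]) simp
  also have "\<dots> = (\<Prod>k\<in>P. exp (l * \<sigma> * (x i (k + 1) - \<mu>) - l^2 / 8))"
    unfolding rounds_playing_eq P_def h_def by (simp add: prod.reindex)
  also have "\<dots> = exp (\<Sum>k\<in>P. l * \<sigma> * (x i (k + 1) - \<mu>) - l^2 / 8)"
    by (rule exp_sum[OF P(1), symmetric])
  also have "(\<Sum>k\<in>P. l * \<sigma> * (x i (k + 1) - \<mu>) - l^2 / 8) =
      l * \<sigma> * ((\<Sum>k\<in>P. x i (k + 1)) - card P * \<mu>) - l^2 / 8 * card P"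
    by (simp add: sum_subtractf sum_distrib_left algebra_simps)
  also have "(\<Sum>k\<in>P. x i (k + 1)) = plays h i * emp_mean x h i"
  proof -
    have "emp_mean x h i = (\<Sum>k\<in>P. x i (k + 1)) / card P"
      unfolding emp_mean_def P(2)[symmetric] by (simp add: P_def h_def)
    moreover have "P \<noteq> {} \<Longrightarrow> plays h i \<noteq> 0" using P by auto
    ultimately show ?thesis using P by (cases "P = {}") simp_all
  qed
  finally show ?thesis using P by (simp add: algebra_simps h_def)
qed

lemma (in finite_measure) integrable_bounded:
  fixes f :: "'a \<Rightarrow> real"
  assumes "f \<in> borel_measurable M" "\<And>\<omega>. \<omega> \<in> space M \<Longrightarrow> \<bar>f \<omega>\<bar> \<le> B"
  shows "integrable M f"
  using assms by (intro integrable_const_bound[where B=B]) (auto intro: AE_I2)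

lemma (in prob_space) integral_exp_centered_le:
  fixes f :: "'a \<Rightarrow> real"
  assumes "f \<in> borel_measurable M" "\<And>\<omega>. \<omega> \<in> space M \<Longrightarrow> f \<omega> \<in> {a..b}" "l > 0"
  shows "(\<integral>\<omega>. exp (l * (f \<omega> - expectation f)) \<partial>M) \<le> exp (l^2 * (b - a)^2 / 8)"
proof -
  interpret interval_bounded_random_variable M f a b
    using assms by unfold_locales (auto intro: AE_I2)
  have "(\<integral>\<^sup>+\<omega>. exp (l * (f \<omega> - expectation f)) \<partial>M) \<le> exp (l^2 * (b - a)^2 / 8)"
    by (rule Hoeffdings_lemma_nn_integral[OF assms(3)])
  then show ?thesis
    by (subst integral_eq_nn_integral) (auto intro: enn2real_leI)
qed

lemma (in prob_space) expectation_indicator_pred: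
  "(\<integral>\<omega>. (if P \<omega> then 1 else 0) \<partial>M) = prob {\<omega>\<in>space M. P \<omega>}"
proof -
  have "(\<integral>\<omega>. (if P \<omega> then 1 else 0) \<partial>M) = (\<integral>\<omega>. indicator {\<omega>\<in>space M. P \<omega>} \<omega> \<partial>M)"
    by (intro Bochner_Integration.integral_cong) (auto simp: indicator_def)
  also have "\<dots> = measure M ({\<omega>\<in>space M. P \<omega>} \<inter> space M)"
    by (rule Bochner_Integration.integral_indicator)
  also have "{\<omega>\<in>space M. P \<omega>} \<inter> space M = {\<omega>\<in>space M. P \<omega>}" by blast
  finally show ?thesis .
qed

section \<open>Expected regret\<close>

locale soft_ucb_bandit = prob_space M
  for M :: "'a measure" and X :: "nat \<Rightarrow> nat \<Rightarrow> 'a \<Rightarrow> real"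
    and mu :: "nat \<Rightarrow> real" and G :: "nat \<Rightarrow> real" and m n :: nat +
  assumes m_less_n: "m < n"
    and G_pos: "\<And>t. t \<in> {1..n} \<Longrightarrow> G t > 0"
    and X_measurable: "\<And>j t. j \<in> {1..m} \<Longrightarrow> t \<in> {1..n} \<Longrightarrow> X j t \<in> borel_measurable M"
    and X_range: "\<And>j t \<omega>. j \<in> {1..m} \<Longrightarrow> t \<in> {1..n} \<Longrightarrow> \<omega> \<in> space M \<Longrightarrow> X j t \<omega> \<in> {0..1}"
    and X_mean: "\<And>j t. j \<in> {1..m} \<Longrightarrow> t \<in> {1..n} \<Longrightarrow> expectation (X j t) = mu j"
    and X_indep: "indep_vars (\<lambda>_. PiM {1..m} (\<lambda>_. borel)) (\<lambda>t \<omega>. \<lambda>j\<in>{1..m}. X j t \<omega>) {1..n}"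
begin

text \<open>Outside the arms and the horizon \<open>X\<close> is unconstrained (not even measurable); the
  algorithm never looks there, so it is run on the truncated rewards.\<close>
definition reward :: "'a \<Rightarrow> nat \<Rightarrow> nat \<Rightarrow> real" where
  "reward \<omega> j t = (if j \<in> {1..m} \<and> t \<in> {1..n} then X j t \<omega> else 0)"

lemma measurable_reward [measurable]: "(\<lambda>\<omega>. reward \<omega> j t) \<in> borel_measurable M"
proof (cases "j \<in> {1..m} \<and> t \<in> {1..n}")
  case False
  then show ?thesis unfolding reward_def if_not_P[OF False] by simp
qed (simp add: reward_def X_measurable)

lemma reward_range: "\<omega> \<in> space M \<Longrightarrow> reward \<omega> j t \<in> {0..1}"
  unfolding reward_def using X_range by simp

lemma expectation_reward: "j \<in> {1..m} \<Longrightarrow> t \<in> {1..n} \<Longrightarrow> expectation (\<lambda>\<omega>. reward \<omega> j t) = mu j"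
  using X_mean[of j t] by (simp add: reward_def)

lemma mu_range: assumes "j \<in> {1..m}" shows "mu j \<in> {0..1}"
proof -
  have n: "1 \<in> {1..n}" using m_less_n by simp
  have "integrable M (\<lambda>\<omega>. reward \<omega> j 1)"
    using reward_range by (intro integrable_bounded[where B=1]) auto
  then have "expectation (\<lambda>\<omega>. reward \<omega> j 1) \<le> expectation (\<lambda>_. 1)"
    using reward_range by (intro integral_mono) auto
  moreover have "0 \<le> expectation (\<lambda>\<omega>. reward \<omega> j 1)"
    using reward_range by (intro integral_nonneg_AE) (auto intro: AE_I2)
  ultimately show ?thesis using expectation_reward[OF assms n] by (simp add: prob_space)
qed

lemma hoeffding_factor_le:
  assumes "i \<in> {1..m}" "\<sigma> \<in> {-1, 1}" "0 \<le> l" "\<omega> \<in> space M"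
  shows "exp (l * \<sigma> * (reward \<omega> i t - mu i) - l^2 / 8) \<le> exp l"
proof -
  have "\<sigma> * (reward \<omega> i t - mu i) \<le> 1"
    using reward_range[OF assms(4), of i t] mu_range[OF assms(1)] assms(2) by auto
  then have "l * (\<sigma> * (reward \<omega> i t - mu i)) \<le> l"
    using assms(3) mult_left_mono by fastforce
  moreover have "0 \<le> l^2 / 8" by simp
  ultimately have "l * \<sigma> * (reward \<omega> i t - mu i) - l^2 / 8 \<le> l"
    unfolding mult.assoc by linarith
  then show ?thesis by simp
qed

lemma hoeffding_process_nonneg: "0 \<le> hoeffding_process m G i \<sigma> \<mu> l x R"
  unfolding hoeffding_process_def by (intro prod_nonneg) auto

lemma hoeffding_process_le:
  assumes "i \<in> {1..m}" "\<sigma> \<in> {-1, 1}" "0 \<le> l" "\<omega> \<in> space M"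
  shows "hoeffding_process m G i \<sigma> (mu i) l (reward \<omega>) R \<le> exp l ^ R"
proof -
  have "hoeffding_process m G i \<sigma> (mu i) l (reward \<omega>) R \<le> (\<Prod>r\<in>{1..R}. exp l)"
    unfolding hoeffding_process_def using hoeffding_factor_le[OF assms] assms(3)
    by (intro prod_mono) auto
  then show ?thesis by simp
qed

lemma integrable_hoeffding_process:
  assumes "i \<in> {1..m}" "\<sigma> \<in> {-1, 1}" "0 \<le> l"
  shows "integrable M (\<lambda>\<omega>. hoeffding_process m G i \<sigma> (mu i) l (reward \<omega>) R)"
  using hoeffding_process_le[OF assms] hoeffding_process_nonneg
  by (intro integrable_bounded[where B="exp l ^ R"] measurable_hoeffding_process measurable_reward) auto

lemma integral_hoeffding_factor_le_1:
  assumes "i \<in> {1..m}" "t \<in> {1..n}" "\<sigma> \<in> {-1, 1}" "l > 0"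
  shows "(\<integral>\<omega>. exp (l * \<sigma> * (reward \<omega> i t - mu i) - l^2 / 8) \<partial>M) \<le> 1"
proof -
  define f where "f \<omega> = \<sigma> * reward \<omega> i t" for \<omega>
  have f_meas: "f \<in> borel_measurable M" unfolding f_def by measurable
  have E_f: "expectation f = \<sigma> * mu i"
    unfolding f_def using expectation_reward[OF assms(1,2)] by simp
  have "f \<omega> \<in> {min 0 \<sigma>..max 0 \<sigma>}" if "\<omega> \<in> space M" for \<omega>
    using reward_range[OF that, of i t] assms(3) by (auto simp: f_def)
  then have "(\<integral>\<omega>. exp (l * (f \<omega> - expectation f)) \<partial>M) \<le> exp (l^2 * (max 0 \<sigma> - min 0 \<sigma>)^2 / 8)"
    by (rule integral_exp_centered_le[OF f_meas _ assms(4)])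
  also have "(max 0 \<sigma> - min 0 \<sigma>)^2 = 1" using assms(3) by auto
  finally have "(\<integral>\<omega>. exp (l * (f \<omega> - expectation f)) \<partial>M) / exp (l^2 / 8) \<le> 1"
    by simp
  also have "exp (l * (f \<omega> - expectation f)) / exp (l^2 / 8) =
      exp (l * \<sigma> * (reward \<omega> i t - mu i) - l^2 / 8)" for \<omega>
    by (simp add: E_f f_def exp_diff mult_exp_exp algebra_simps)
  then have "(\<integral>\<omega>. exp (l * (f \<omega> - expectation f)) \<partial>M) / exp (l^2 / 8) =
      (\<integral>\<omega>. exp (l * \<sigma> * (reward \<omega> i t - mu i) - l^2 / 8) \<partial>M)"
    by (simp only: integral_divide_zero[symmetric])
  finally show ?thesis .
qed

text \<open>The rewards of rounds \<open>1..R\<close> as a point of the product space of the independence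
  hypothesis (round index first).\<close>
definition past_rewards :: "nat \<Rightarrow> (nat \<Rightarrow> nat \<Rightarrow> real) \<Rightarrow> nat \<Rightarrow> nat \<Rightarrow> real" where
  "past_rewards R y j t = (if j \<in> {1..m} \<and> t \<in> {1..R} then y t j else 0)"

lemma measurable_past_rewards:
  "(\<lambda>y. past_rewards R y j t) \<in> borel_measurable (PiM {1..R} (\<lambda>_. PiM {1..m} (\<lambda>_. borel)))"
proof (cases "j \<in> {1..m} \<and> t \<in> {1..R}")
  case True
  then have "(\<lambda>y. (\<lambda>z. z j) (y t)) \<in> borel_measurable (PiM {1..R} (\<lambda>_. PiM {1..m} (\<lambda>_. borel)))"
    by (intro measurable_compose[OF measurable_component_singleton[of t]
          measurable_component_singleton[of j]]) auto
  then show ?thesis using True by (simp add: past_rewards_def)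
next
  case False
  then show ?thesis unfolding past_rewards_def if_not_P[OF False] by simp
qed

lemma integral_mult_next_round:
  fixes \<Psi> :: "(nat \<Rightarrow> nat \<Rightarrow> real) \<Rightarrow> real" and g :: "real \<Rightarrow> real"
  assumes "Suc R \<le> n" "i \<in> {1..m}"
    and \<Psi>_cong: "\<And>x x'. (\<And>j r. j \<in> {1..m} \<Longrightarrow> 1 \<le> r \<Longrightarrow> r \<le> R \<Longrightarrow> x j r = x' j r) \<Longrightarrow> \<Psi> x = \<Psi> x'"
    and \<Psi>_meas: "(\<lambda>y. \<Psi> (past_rewards R y)) \<in> borel_measurable (PiM {1..R} (\<lambda>_. PiM {1..m} (\<lambda>_. borel)))"
    and g_meas: "g \<in> borel_measurable borel"
    and "integrable M (\<lambda>\<omega>. \<Psi> (reward \<omega>))" "integrable M (\<lambda>\<omega>. g (reward \<omega> i (Suc R)))"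
  shows "(\<integral>\<omega>. \<Psi> (reward \<omega>) * g (reward \<omega> i (Suc R)) \<partial>M) =
    (\<integral>\<omega>. \<Psi> (reward \<omega>) \<partial>M) * (\<integral>\<omega>. g (reward \<omega> i (Suc R)) \<partial>M)"
proof -
  let ?past = "\<lambda>\<omega>. \<lambda>t\<in>{1..R}. \<lambda>j\<in>{1..m}. X j t \<omega>"
  let ?next = "\<lambda>\<omega>. \<lambda>t\<in>{Suc R}. \<lambda>j\<in>{1..m}. X j t \<omega>"
  have "indep_var (PiM {1..R} (\<lambda>_. PiM {1..m} (\<lambda>_. borel))) ?past
                  (PiM {Suc R} (\<lambda>_. PiM {1..m} (\<lambda>_. borel))) ?next"
    using assms(1) by (intro indep_var_restrict[OF X_indep]) auto
  moreover have "(\<lambda>y. g (y (Suc R) i)) \<in> borel_measurable (PiM {Suc R} (\<lambda>_. PiM {1..m} (\<lambda>_. borel)))"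
    using assms(2)
    by (intro measurable_compose[OF _ g_meas] measurable_compose[OF
          measurable_component_singleton[of "Suc R"] measurable_component_singleton[of i]]) auto
  ultimately have "indep_var borel ((\<lambda>y. \<Psi> (past_rewards R y)) \<circ> ?past) borel ((\<lambda>y. g (y (Suc R) i)) \<circ> ?next)"
    by (rule indep_var_compose[OF _ \<Psi>_meas])
  moreover have "(\<lambda>y. \<Psi> (past_rewards R y)) \<circ> ?past = (\<lambda>\<omega>. \<Psi> (reward \<omega>))"
  proof
    fix \<omega>
    show "((\<lambda>y. \<Psi> (past_rewards R y)) \<circ> ?past) \<omega> = \<Psi> (reward \<omega>)"
      unfolding comp_def using assms(1)
      by (intro \<Psi>_cong) (auto simp: past_rewards_def reward_def)
  qed
  moreover have "(\<lambda>y. g (y (Suc R) i)) \<circ> ?next = (\<lambda>\<omega>. g (reward \<omega> i (Suc R)))"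
    using assms(1,2) by (auto simp: reward_def)
  ultimately show ?thesis using assms(6,7) by (simp add: indep_var_lebesgue_integral)
qed

lemma integral_hoeffding_process_Suc_le:
  assumes i: "i \<in> {1..m}" and \<sigma>: "\<sigma> \<in> {-1, 1}" and l: "l > 0" and R: "Suc R \<le> n"
  shows "(\<integral>\<omega>. hoeffding_process m G i \<sigma> (mu i) l (reward \<omega>) (Suc R) \<partial>M)
    \<le> (\<integral>\<omega>. hoeffding_process m G i \<sigma> (mu i) l (reward \<omega>) R \<partial>M)"
proof -
  let ?\<Phi> = "\<lambda>x. hoeffding_process m G i \<sigma> (mu i) l x R"
  define \<Psi> where "\<Psi> x = ?\<Phi> x * (if ucb_arm m G x (Suc R) = i then 1 else 0)" for x
  define g where "g z = exp (l * \<sigma> * (z - mu i) - l^2 / 8)" for z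
  have \<Phi>_le: "\<bar>?\<Phi> (reward \<omega>)\<bar> \<le> exp l ^ R" if "\<omega> \<in> space M" for \<omega>
    using hoeffding_process_le[OF i \<sigma> _ that] hoeffding_process_nonneg l by simp
  have \<Psi>_le: "\<bar>\<Psi> (reward \<omega>)\<bar> \<le> exp l ^ R" if "\<omega> \<in> space M" for \<omega>
    using \<Phi>_le[OF that] by (simp add: \<Psi>_def)
  have g_le: "\<bar>g (reward \<omega> i (Suc R))\<bar> \<le> exp l" if "\<omega> \<in> space M" for \<omega>
    using hoeffding_factor_le[OF i \<sigma> _ that] l by (simp add: g_def)
  have \<Psi>_meas: "(\<lambda>\<omega>. \<Psi> (x \<omega>)) \<in> borel_measurable N"
    if "\<And>j t. (\<lambda>\<omega>. x \<omega> j t) \<in> borel_measurable N" for N and x :: "_ \<Rightarrow> nat \<Rightarrow> nat \<Rightarrow> real"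
  proof -
    note [measurable] = measurable_hoeffding_process[OF that] measurable_ucb_arm[OF that]
    show ?thesis unfolding \<Psi>_def by measurable
  qed
  have g_meas: "g \<in> borel_measurable borel" unfolding g_def by measurable
  have int_\<Psi>: "integrable M (\<lambda>\<omega>. \<Psi> (reward \<omega>))"
    by (rule integrable_bounded[OF \<Psi>_meas[OF measurable_reward] \<Psi>_le])
  have int_g: "integrable M (\<lambda>\<omega>. g (reward \<omega> i (Suc R)))"
    by (rule integrable_bounded[OF _ g_le]) (simp add: g_def)
  have int_\<Psi>g: "integrable M (\<lambda>\<omega>. \<Psi> (reward \<omega>) * g (reward \<omega> i (Suc R)))"
    using \<Psi>_le g_le
    by (intro integrable_bounded[where B="exp l ^ R * exp l"] borel_measurable_times
        \<Psi>_meas[OF measurable_reward]) (auto simp: g_def abs_mult intro: mult_mono)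
  have "(\<integral>\<omega>. \<Psi> (reward \<omega>) * g (reward \<omega> i (Suc R)) \<partial>M) =
      (\<integral>\<omega>. \<Psi> (reward \<omega>) \<partial>M) * (\<integral>\<omega>. g (reward \<omega> i (Suc R)) \<partial>M)"
  proof (rule integral_mult_next_round[OF R i _ \<Psi>_meas[OF measurable_past_rewards] g_meas int_\<Psi> int_g])
    fix x x' :: "nat \<Rightarrow> nat \<Rightarrow> real"
    assume agree: "\<And>j r. j \<in> {1..m} \<Longrightarrow> 1 \<le> r \<Longrightarrow> r \<le> R \<Longrightarrow> x j r = x' j r"
    then have "?\<Phi> x = ?\<Phi> x'" by (rule hoeffding_process_cong[OF i])
    moreover have "ucb_arm m G x (Suc R) = ucb_arm m G x' (Suc R)"
      using agree by (intro ucb_arm_cong) auto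
    ultimately show "\<Psi> x = \<Psi> x'" by (simp add: \<Psi>_def)
  qed
  also have "\<dots> \<le> (\<integral>\<omega>. \<Psi> (reward \<omega>) \<partial>M)"
    using integral_hoeffding_factor_le_1[OF i _ \<sigma> l, of "Suc R"] R hoeffding_process_nonneg
    by (intro mult_left_le) (auto simp: g_def \<Psi>_def intro!: integral_nonneg_AE)
  finally have "(\<integral>\<omega>. \<Psi> (reward \<omega>) * g (reward \<omega> i (Suc R)) \<partial>M) \<le> (\<integral>\<omega>. \<Psi> (reward \<omega>) \<partial>M)" .
  moreover have "hoeffding_process m G i \<sigma> (mu i) l (reward \<omega>) (Suc R) =
      (?\<Phi> (reward \<omega>) - \<Psi> (reward \<omega>)) + \<Psi> (reward \<omega>) * g (reward \<omega> i (Suc R))" for \<omega>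
    by (simp add: hoeffding_process_Suc \<Psi>_def g_def)
  moreover have "integrable M (\<lambda>\<omega>. ?\<Phi> (reward \<omega>))"
    using l by (intro integrable_hoeffding_process[OF i \<sigma>]) simp
  ultimately show ?thesis
    using int_\<Psi> int_\<Psi>g by (simp add: Bochner_Integration.integral_diff)
qed

lemma integral_hoeffding_process_le_1:
  assumes "i \<in> {1..m}" "\<sigma> \<in> {-1, 1}" "l > 0"
  shows "R \<le> n \<Longrightarrow> (\<integral>\<omega>. hoeffding_process m G i \<sigma> (mu i) l (reward \<omega>) R \<partial>M) \<le> 1"
proof (induction R)
  case 0
  then show ?case by (simp add: hoeffding_process_def prob_space)
next
  case (Suc R)
  then show ?case using integral_hoeffding_process_Suc_le[OF assms, of R] by simp
qed

lemma prob_deviation_le: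
  assumes i: "i \<in> {1..m}" and \<sigma>: "\<sigma> \<in> {-1, 1}" and c: "0 < c" and R: "R \<le> n"
  shows "prob {\<omega>\<in>space M. plays (ucb_hist m G (reward \<omega>) R) i = s \<and>
      c \<le> \<sigma> * (emp_mean (reward \<omega>) (ucb_hist m G (reward \<omega>) R) i - mu i)} \<le> exp (- (2 * real s * c^2))"
proof -
  let ?\<Phi> = "\<lambda>\<omega>. hoeffding_process m G i \<sigma> (mu i) (4 * c) (reward \<omega>) R"
  have "{\<omega>\<in>space M. plays (ucb_hist m G (reward \<omega>) R) i = s \<and>
      c \<le> \<sigma> * (emp_mean (reward \<omega>) (ucb_hist m G (reward \<omega>) R) i - mu i)}
      \<subseteq> {\<omega>\<in>space M. exp (2 * real s * c^2) \<le> ?\<Phi> \<omega>}"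
  proof (intro subsetI, elim CollectE conjE, intro CollectI conjI)
    fix \<omega> assume \<omega>: "\<omega> \<in> space M" and plays: "plays (ucb_hist m G (reward \<omega>) R) i = s"
      and dev: "c \<le> \<sigma> * (emp_mean (reward \<omega>) (ucb_hist m G (reward \<omega>) R) i - mu i)"
    have "4 * c * s * c \<le> 4 * c * s * (\<sigma> * (emp_mean (reward \<omega>) (ucb_hist m G (reward \<omega>) R) i - mu i))"
      using c dev by (intro mult_left_mono) auto
    then show "exp (2 * real s * c^2) \<le> ?\<Phi> \<omega>"
      unfolding hoeffding_process_eq plays by (simp add: power2_eq_square algebra_simps)
  qed (simp)
  then have "prob {\<omega>\<in>space M. plays (ucb_hist m G (reward \<omega>) R) i = s \<and>
      c \<le> \<sigma> * (emp_mean (reward \<omega>) (ucb_hist m G (reward \<omega>) R) i - mu i)}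
      \<le> prob {\<omega>\<in>space M. exp (2 * real s * c^2) \<le> ?\<Phi> \<omega>}"
    using measurable_hoeffding_process[OF measurable_reward] by (intro finite_measure_mono) measurable
  also have "\<dots> \<le> (\<integral>\<omega>. ?\<Phi> \<omega> \<partial>M) / exp (2 * real s * c^2)"
    using c \<sigma> hoeffding_process_nonneg
    by (intro integral_Markov_inequality_measure[where A="space M"] integrable_hoeffding_process i) auto
  also have "\<dots> \<le> 1 / exp (2 * real s * c^2)"
    using integral_hoeffding_process_le_1[OF i \<sigma> _ R] c by (intro divide_right_mono) auto
  also have "1 / exp (2 * real s * c^2) = exp (- (2 * real s * c^2))"
    by (simp add: exp_minus divide_inverse)
  finally show ?thesis .
qed

lemma xi_gt_1: "t \<in> {1..n} \<Longrightarrow> 1 < xi G t"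
  using G_pos[of t] by (simp add: xi_def)

lemma measurable_confidence_violation [measurable]:
  "Measurable.pred M (\<lambda>\<omega>. confidence_violation m G (reward \<omega>) i t s \<sigma> \<mu>)"
proof -
  have "Measurable.pred M (\<lambda>\<omega>. plays h i = s \<and>
      sqrt (2 * ln (xi G t) / real s) \<le> \<sigma> * (emp_mean (reward \<omega>) h i - \<mu>))" for h
    unfolding emp_mean_def by measurable
  then show ?thesis
    unfolding confidence_violation_def by (rule measurable_pred_ucb_hist[OF measurable_reward])
qed

lemma prob_confidence_violation_le:
  assumes "i \<in> {1..m}" "\<sigma> \<in> {-1, 1}" "1 \<le> s" "t \<in> {1..n}"
  shows "prob {\<omega>\<in>space M. confidence_violation m G (reward \<omega>) i t s \<sigma> (mu i)} \<le> xi G t powr -4"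
proof -
  define c where "c = sqrt (2 * ln (xi G t) / real s)"
  have xi: "1 < xi G t" using xi_gt_1[OF assms(4)] .
  then have "0 < c" using assms(3) by (simp add: c_def)
  then have "prob {\<omega>\<in>space M. confidence_violation m G (reward \<omega>) i t s \<sigma> (mu i)} \<le> exp (- (2 * real s * c^2))"
    unfolding confidence_violation_def c_def[symmetric] using assms
    by (intro prob_deviation_le) auto
  also have "2 * real s * c^2 = 4 * ln (xi G t)"
    unfolding c_def using xi assms(3) by simp
  finally show ?thesis using xi by (simp add: powr_def)
qed

lemma regret_reward: "regret m n G mu (\<lambda>j t. X j t \<omega>) = regret m n G mu (reward \<omega>)"
proof -
  have "ucb_arm m G (\<lambda>j t. X j t \<omega>) t = ucb_arm m G (reward \<omega>) t" if "t \<in> {1..n}" for t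
    using that by (intro ucb_arm_cong) (auto simp: reward_def)
  then show ?thesis by (simp add: regret_def)
qed

lemma integrable_regret: "integrable M (\<lambda>\<omega>. regret m n G mu (reward \<omega>))"
proof -
  note [measurable] = measurable_ucb_arm[OF measurable_reward]
  have "\<bar>regret m n G mu (reward \<omega>)\<bar> \<le> (\<Sum>t\<in>{1..n}. \<Sum>j\<in>{1..m}. \<bar>(Max (mu ` {1..m}) - mu j) * G t\<bar>)"
    for \<omega>
  proof -
    have "\<bar>regret m n G mu (reward \<omega>)\<bar> \<le> (\<Sum>t\<in>{1..n}. \<Sum>j\<in>{1..m}.
        \<bar>(Max (mu ` {1..m}) - mu j) * G t * (if ucb_arm m G (reward \<omega>) t = j then 1 else 0)\<bar>)"
      unfolding regret_def by (intro order.trans[OF sum_abs] sum_mono sum_abs)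
    also have "\<dots> \<le> (\<Sum>t\<in>{1..n}. \<Sum>j\<in>{1..m}. \<bar>(Max (mu ` {1..m}) - mu j) * G t\<bar>)"
      by (intro sum_mono) (simp add: abs_mult)
    finally show ?thesis .
  qed
  then show ?thesis
    by (intro integrable_bounded) (simp_all add: regret_def)
qed

lemma integrable_violations: "integrable M (\<lambda>\<omega>. violations m n G mu i j (reward \<omega>))"
proof -
  have "integrable M (\<lambda>\<omega>. if confidence_violation m G (reward \<omega>) k t s \<sigma> \<mu> then 1 else 0 :: real)"
    for k t s \<sigma> \<mu>
    by (rule integrable_bounded[where B=1]) auto
  then show ?thesis
    unfolding violations_def by (intro Bochner_Integration.integrable_sum Bochner_Integration.integrable_add)
qed

lemma expected_violations_le:
  assumes "i \<in> {1..m}" "j \<in> {1..m}"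
  shows "(\<integral>\<omega>. violations m n G mu i j (reward \<omega>) \<partial>M) \<le>
    (\<Sum>t\<in>{m+1..n}. 2 * real (t - m - 1) * xi G t powr -4)"
proof -
  have violation_le: "(\<integral>\<omega>. (if confidence_violation m G (reward \<omega>) k t s \<sigma> (mu k) then 1 else 0) \<partial>M)
      \<le> xi G t powr -4" if "k \<in> {1..m}" "\<sigma> \<in> {-1, 1}" "1 \<le> s" "t \<in> {1..n}" for k t s \<sigma>
    unfolding expectation_indicator_pred using that by (rule prob_confidence_violation_le)
  have int: "integrable M (\<lambda>\<omega>. if confidence_violation m G (reward \<omega>) k t s \<sigma> \<mu> then 1 else 0 :: real)"
    for k t s \<sigma> \<mu>
    by (rule integrable_bounded[where B=1]) auto
  have "(\<integral>\<omega>. violations m n G mu i j (reward \<omega>) \<partial>M) =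
    (\<Sum>t\<in>{m+1..n}.
       (\<Sum>s\<in>{1..t-m-1}. (\<integral>\<omega>. (if confidence_violation m G (reward \<omega>) i t s (-1) (mu i) then 1 else 0) \<partial>M)) +
       (\<Sum>s\<in>{2..t-m}. (\<integral>\<omega>. (if confidence_violation m G (reward \<omega>) j t s 1 (mu j) then 1 else 0) \<partial>M)))"
    unfolding violations_def using int
    by (simp add: Bochner_Integration.integral_sum Bochner_Integration.integral_add
        Bochner_Integration.integrable_sum)
  also have "\<dots> \<le> (\<Sum>t\<in>{m+1..n}. (\<Sum>s\<in>{1..t-m-1}. xi G t powr -4) + (\<Sum>s\<in>{2..t-m}. xi G t powr -4))"
    using assms by (intro sum_mono add_mono violation_le) auto
  also have "\<dots> = (\<Sum>t\<in>{m+1..n}. 2 * real (t - m - 1) * xi G t powr -4)"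
    by (intro sum.cong refl) auto
  finally show ?thesis .
qed

lemma Max_G_nonneg: "0 \<le> Max (G ` {m+1..n})"
proof -
  have "0 < G (m + 1)" "G (m + 1) \<le> Max (G ` {m+1..n})" using G_pos m_less_n by simp_all
  then show ?thesis by linarith
qed

lemma ln_xi_le_ln_Max:
  assumes "t \<in> {m+1..n}"
  shows "ln (xi G t) \<le> ln (Max (xi G ` {m+1..n}))"
proof -
  have "1 < xi G t" using xi_gt_1[of t] assms by simp
  moreover have "xi G t \<le> Max (xi G ` {m+1..n})" using assms by (intro Max_ge) auto
  ultimately show ?thesis by (subst ln_le_cancel_iff) auto
qed

lemma ln_Max_xi_nonneg: "0 \<le> ln (Max (xi G ` {m+1..n}))"
proof -
  have "0 < ln (xi G (m + 1))" using xi_gt_1[of "m + 1"] m_less_n by simp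
  moreover have "ln (xi G (m + 1)) \<le> ln (Max (xi G ` {m+1..n}))"
    using m_less_n by (intro ln_xi_le_ln_Max) simp
  ultimately show ?thesis by linarith
qed

lemma expected_regret_le_threshold:
  assumes "1 \<le> m" "i \<in> {1..m}" "mu i = Max (mu ` {1..m})" "\<And>j. 2 \<le> ell j"
    and "\<And>j t. j \<in> {1..m} \<Longrightarrow> mu j < mu i \<Longrightarrow> t \<in> {m+1..n} \<Longrightarrow>
           8 * ln (xi G t) \<le> real (ell j) * (mu i - mu j)^2"
  shows "(\<integral>\<omega>. regret m n G mu (\<lambda>j t. X j t \<omega>) \<partial>M) \<le> (\<Sum>j\<in>{1..m}. G j * (mu i - mu j)) +
    Max (G ` {m+1..n}) * (\<Sum>j\<in>{j\<in>{1..m}. mu j < mu i}. (mu i - mu j) *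
      (real (ell j - 1) + (\<Sum>t\<in>{m+1..n}. 2 * real (t - m - 1) * xi G t powr -4)))"
proof -
  let ?Gmax = "Max (G ` {m+1..n})"
  let ?arms = "{j\<in>{1..m}. mu j < mu i}"
  define Z where "Z \<omega> = (\<Sum>j\<in>{1..m}. G j * (mu i - mu j)) +
    ?Gmax * (\<Sum>j\<in>?arms. (mu i - mu j) * (real (ell j - 1) + violations m n G mu i j (reward \<omega>)))" for \<omega>
  have "integrable M Z"
    unfolding Z_def using integrable_violations
    by (intro Bochner_Integration.integrable_add integrable_const integrable_mult_right
        Bochner_Integration.integrable_sum) auto
  then have "(\<integral>\<omega>. regret m n G mu (\<lambda>j t. X j t \<omega>) \<partial>M) \<le> (\<integral>\<omega>. Z \<omega> \<partial>M)"
    unfolding regret_reward Z_def using assms m_less_n Max_G_nonneg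
    by (intro integral_mono integrable_regret regret_le_violations) auto
  also have "(\<integral>\<omega>. Z \<omega> \<partial>M) = (\<Sum>j\<in>{1..m}. G j * (mu i - mu j)) +
    ?Gmax * (\<Sum>j\<in>?arms. (mu i - mu j) * (real (ell j - 1) + (\<integral>\<omega>. violations m n G mu i j (reward \<omega>) \<partial>M)))"
    unfolding Z_def using integrable_violations
    by (simp add: prob_space Bochner_Integration.integral_sum Bochner_Integration.integrable_sum
        integrable_mult_right)
  also have "\<dots> \<le> (\<Sum>j\<in>{1..m}. G j * (mu i - mu j)) +
    ?Gmax * (\<Sum>j\<in>?arms. (mu i - mu j) * (real (ell j - 1) + (\<Sum>t\<in>{m+1..n}. 2 * real (t - m - 1) * xi G t powr -4)))"
    using Max_G_nonneg assms(2) expected_violations_le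
    by (intro add_left_mono mult_left_mono sum_mono) auto
  finally show ?thesis .
qed

lemma expected_regret_le:
  assumes "1 \<le> m"
  shows "(\<integral>\<omega>. regret m n G mu (\<lambda>j t. X j t \<omega>) \<partial>M)
    \<le> (\<Sum>j\<in>{1..m}. G j * (Max (mu ` {1..m}) - mu j))
      + Max (G ` {m+1..n}) *
        ((\<Sum>j\<in>{j\<in>{1..m}. mu j < Max (mu ` {1..m})}.
            8 / (Max (mu ` {1..m}) - mu j) * ln (Max (xi G ` {m+1..n})))
         + (\<Sum>j\<in>{1..m}. (Max (mu ` {1..m}) - mu j) *
              (1 + (\<Sum>t\<in>{m+1..n}. 2 * (xi G t) powr (-4) * (real t - 1 - real m)^2))))"
proof -
  have "Max (mu ` {1..m}) \<in> mu ` {1..m}" using assms by (intro Max_in) auto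
  then obtain i where i: "i \<in> {1..m}" "mu i = Max (mu ` {1..m})" by (metis imageE)
  define L where "L = ln (Max (xi G ` {m+1..n}))"
  define S where "S = (\<Sum>t\<in>{m+1..n}. 2 * (xi G t) powr (-4) * (real t - 1 - real m)^2)"
  let ?C = "\<Sum>j\<in>{1..m}. G j * (mu i - mu j)"
  let ?Gmax = "Max (G ` {m+1..n})"
  let ?arms = "{j\<in>{1..m}. mu j < mu i}"
  have "8 * ln (xi G t) \<le> real (sample_threshold L (mu i - mu j)) * (mu i - mu j)^2"
    if "mu j < mu i" "t \<in> {m+1..n}" for j t
    using ln_xi_le_ln_Max[OF that(2)] sample_threshold_mult_gap_ge[of "mu i - mu j" L] that(1)
    unfolding L_def by simp
  then have "(\<integral>\<omega>. regret m n G mu (\<lambda>j t. X j t \<omega>) \<partial>M) \<le> ?C + ?Gmax * (\<Sum>j\<in>?arms. (mu i - mu j) *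
      (real (sample_threshold L (mu i - mu j) - 1) + (\<Sum>t\<in>{m+1..n}. 2 * real (t - m - 1) * xi G t powr -4)))"
    by (intro expected_regret_le_threshold[OF assms i] sample_threshold_ge_2)
  also have "\<dots> \<le> ?C + ?Gmax * (\<Sum>j\<in>?arms. 8 / (mu i - mu j) * L + (mu i - mu j) * (1 + S))"
  proof (intro add_left_mono mult_left_mono[OF _ Max_G_nonneg] sum_mono)
    fix j assume "j \<in> ?arms"
    then show "(mu i - mu j) * (real (sample_threshold L (mu i - mu j) - 1) +
        (\<Sum>t\<in>{m+1..n}. 2 * real (t - m - 1) * xi G t powr -4))
        \<le> 8 / (mu i - mu j) * L + (mu i - mu j) * (1 + S)"
      unfolding L_def S_def
      by (intro gap_mult_sample_threshold_le[OF ln_Max_xi_nonneg _ violation_sum_le_square_sum]) simp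
  qed
  also have "\<dots> \<le> ?C + ?Gmax * ((\<Sum>j\<in>?arms. 8 / (mu i - mu j) * L) + (\<Sum>j\<in>{1..m}. (mu i - mu j) * (1 + S)))"
  proof -
    have "0 \<le> S" unfolding S_def by (intro sum_nonneg) simp
    then have "(\<Sum>j\<in>?arms. (mu i - mu j) * (1 + S)) \<le> (\<Sum>j\<in>{1..m}. (mu i - mu j) * (1 + S))"
      using i by (intro sum_mono2) auto
    then show ?thesis using Max_G_nonneg by (simp add: sum.distrib mult_left_mono)
  qed
  finally show ?thesis unfolding i(2) L_def S_def .
qed

end

theorem theorem3p4:
  fixes M :: "'a measure" and X :: "nat \<Rightarrow> nat \<Rightarrow> 'a \<Rightarrow> real"
    and mu :: "nat \<Rightarrow> real" and G :: "nat \<Rightarrow> real" and m n :: nat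
  assumes "prob_space M"
    and "m < n"
    and "\<And>t. t \<in> {1..n} \<Longrightarrow> G t > 0"
    and "\<And>j t. j \<in> {1..m} \<Longrightarrow> t \<in> {1..n} \<Longrightarrow> X j t \<in> borel_measurable M"
    and "\<And>j t \<omega>. j \<in> {1..m} \<Longrightarrow> t \<in> {1..n} \<Longrightarrow> \<omega> \<in> space M \<Longrightarrow> X j t \<omega> \<in> {0..1}"
    and "\<And>j t. j \<in> {1..m} \<Longrightarrow> t \<in> {1..n} \<Longrightarrow> distr M borel (X j t) = distr M borel (X j 1)"
    and "\<And>j t. j \<in> {1..m} \<Longrightarrow> t \<in> {1..n} \<Longrightarrow> integral\<^sup>L M (X j t) = mu j"
    and "prob_space.indep_vars M (\<lambda>_. PiM {1..m} (\<lambda>_. borel))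
           (\<lambda>t \<omega>. \<lambda>j\<in>{1..m}. X j t \<omega>) {1..n}"
  shows "integral\<^sup>L M (\<lambda>\<omega>. regret m n G mu (\<lambda>j t. X j t \<omega>))
    \<le> (\<Sum>j\<in>{1..m}. G j * (Max (mu ` {1..m}) - mu j))
      + Max (G ` {m+1..n}) *
        ((\<Sum>j\<in>{j\<in>{1..m}. mu j < Max (mu ` {1..m})}.
            8 / (Max (mu ` {1..m}) - mu j) * ln (Max (xi G ` {m+1..n})))
         + (\<Sum>j\<in>{1..m}. (Max (mu ` {1..m}) - mu j) *
              (1 + (\<Sum>t\<in>{m+1..n}. 2 * (xi G t) powr (-4) * (real t - 1 - real m)^2))))"
proof (cases "m = 0")
  case True
  then show ?thesis by (simp add: regret_def)
next
  case False
  interpret soft_ucb_bandit M X mu G m n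
    using assms by (intro soft_ucb_bandit.intro soft_ucb_bandit_axioms.intro) auto
  show ?thesis using False by (intro expected_regret_le) simp
qed

end
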